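(* Let $f,g$ be packed words of length $n$. Then $g\leq f$ if, and only if, $g$ is a (strict) T-partition of the topology $\mathcal{T}_f$.
   Context: $[n]=\{1,\ldots,n\}$. A packed word of length $n$ is a word $f=f(1)\ldots f(n)$ of positive integers with $\{f(1),\ldots,f(n)\}=\{1,\ldots,\max f\}$. For packed words $f,g$ of the same length $n$, $g\leq f$ means: for all $i,j\in[n]$, $f(i)\leq f(j)\Rightarrow g(i)\leq g(j)$; $f(i)>f(j)$ and $i<j$ $\Rightarrow g(i)>g(j)$; $f(i)=f(j)\Rightarrow g(i)=g(j)$. For a packed word $f$ of length $n$, $\mathcal{T}_f$ is the topology on $[n]$ whose associated preorder is $i\leq j$ iff $f(i)\leq f(j)$ (its open sets are $\emptyset$ and the sets $f^{-1}(\{i,\ldots,\max f\})$). For a topology $\mathcal{T}$ on $[n]$: $i\leq_{\mathcal{T}}j$ iff every open set containing $i$ contains $j$; $i\sim_{\mathcal{T}}j$ iff $i\leq_{\mathcal{T}}j$ and $j\leq_{\mathcal{T}}i$; $i<_{\mathcal{T}}j$ iff $i\leq_{\mathcal{T}}j$ and not $j\leq_{\mathcal{T}}i$. A (strict) T-partition of $\mathcal{T}$ is a packed word $g$ of length $n$ (viewed as a surjection $[n]\to[\max g]$) such that: $i\leq_{\mathcal{T}}j\Rightarrow g(i)\leq g(j)$; $i<_{\mathcal{T}}j$ and $i>j$ $\Rightarrow g(i)<g(j)$; and if $i<j<k$, $i\sim_{\mathcal{T}}k$ and $g(i)=g(j)=g(k)$, then $i\sim_{\mathcal{T}}j$ and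 $j\sim_{\mathcal{T}}k$. *)

theory Defs
  imports Main
begin

text \<open>Words of length n are functions nat => nat, read on the positions {1..n}.\<close>

definition packed :: "nat \<Rightarrow> (nat \<Rightarrow> nat) \<Rightarrow> bool" where
  "packed n f \<longleftrightarrow> (\<exists>m. f ` {1..n} = {1..m})"

definition max_word :: "nat \<Rightarrow> (nat \<Rightarrow> nat) \<Rightarrow> nat" where
  "max_word n f = Max (f ` {1..n})"

definition word_le :: "nat \<Rightarrow> (nat \<Rightarrow> nat) \<Rightarrow> (nat \<Rightarrow> nat) \<Rightarrow> bool" where
  "word_le n g f \<longleftrightarrow>
     (\<forall>i\<in>{1..n}. \<forall>j\<in>{1..n}.
        (f i \<le> f j \<longrightarrow> g i \<le> g j) \<and>
        (f i > f j \<and> i < j \<longrightarrow> g i > g j) \<and>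
        (f i = f j \<longrightarrow> g i = g j))"

definition topo_of_word :: "nat \<Rightarrow> (nat \<Rightarrow> nat) \<Rightarrow> nat set set" where
  "topo_of_word n f = {{}} \<union> {{x \<in> {1..n}. i \<le> f x} | i. 1 \<le> i \<and> i \<le> max_word n f}"

definition leT :: "nat set set \<Rightarrow> nat \<Rightarrow> nat \<Rightarrow> bool" where
  "leT T i j \<longleftrightarrow> (\<forall>U\<in>T. i \<in> U \<longrightarrow> j \<in> U)"

definition simT :: "nat set set \<Rightarrow> nat \<Rightarrow> nat \<Rightarrow> bool" where
  "simT T i j \<longleftrightarrow> leT T i j \<and> leT T j i"

definition ltT :: "nat set set \<Rightarrow> nat \<Rightarrow> nat \<Rightarrow> bool" where
  "ltT T i j \<longleftrightarrow> leT T i j \<and> \<not> leT T j i"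

definition strict_T_partition :: "nat \<Rightarrow> nat set set \<Rightarrow> (nat \<Rightarrow> nat) \<Rightarrow> bool" where
  "strict_T_partition n T g \<longleftrightarrow>
     packed n g \<and>
     (\<forall>i\<in>{1..n}. \<forall>j\<in>{1..n}.
        (leT T i j \<longrightarrow> g i \<le> g j) \<and>
        (ltT T i j \<and> i > j \<longrightarrow> g i < g j)) \<and>
     (\<forall>i\<in>{1..n}. \<forall>j\<in>{1..n}. \<forall>k\<in>{1..n}.
        i < j \<and> j < k \<and> simT T i k \<and> g i = g j \<and> g j = g k
          \<longrightarrow> simT T i j \<and> simT T j k)"

end

theory Submission
  imports Defs
begin

text \<open>Since the open sets of T_f are the upper level sets of f, the preorder of T_f is
  i \<le> j iff f i \<le> f j. Hence the first two T-partition conditions are the first two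
  clauses of g \<le> f, whose third clause follows from the first applied both ways. The
  third T-partition condition holds for g \<le> f because, for i < j < k with f i = f k,
  a value f j below f i forces g i > g j and a value above f k forces g j > g k.\<close>

lemma max_word_packed:
  assumes "f ` {1..n} = {1..m}" "n \<ge> 1"
  shows "max_word n f = m"
proof -
  have "{1..m} \<noteq> {}" unfolding assms(1)[symmetric] using assms(2) by simp
  then show ?thesis unfolding max_word_def assms(1) by (simp add: Max_eq_iff)
qed

lemma leT_topo_of_word_iff:
  assumes "packed n f" "i \<in> {1..n}" "j \<in> {1..n}"
  shows "leT (topo_of_word n f) i j \<longleftrightarrow> f i \<le> f j"
proof
  assume le: "leT (topo_of_word n f) i j"
  obtain m where m: "f ` {1..n} = {1..m}" using assms(1) unfolding packed_def by blast
  have max: "max_word n f = m" using max_word_packed[OF m] assms(2) by simp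
  let ?X = "{x \<in> {1..n}. f i \<le> f x}"
  have "f i \<in> {1..m}" using m assms(2) by blast
  then have "?X \<in> topo_of_word n f"
    unfolding topo_of_word_def max by (intro UnI2 CollectI exI[of _ "f i"]) simp
  with le have "i \<in> ?X \<longrightarrow> j \<in> ?X" unfolding leT_def by (rule bspec)
  moreover have "i \<in> ?X" using assms(2) by simp
  ultimately have "j \<in> ?X" by (rule mp)
  then show "f i \<le> f j" by simp
next
  assume "f i \<le> f j"
  then show "leT (topo_of_word n f) i j"
    unfolding leT_def topo_of_word_def using assms(3) by auto
qed

lemma simT_topo_of_word_iff:
  assumes "packed n f" "i \<in> {1..n}" "j \<in> {1..n}"
  shows "simT (topo_of_word n f) i j \<longleftrightarrow> f i = f j"
  using assms by (auto simp: simT_def leT_topo_of_word_iff)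

lemma ltT_topo_of_word_iff:
  assumes "packed n f" "i \<in> {1..n}" "j \<in> {1..n}"
  shows "ltT (topo_of_word n f) i j \<longleftrightarrow> f i < f j"
  using assms by (auto simp: ltT_def leT_topo_of_word_iff)

lemma strict_T_partition_topo_of_word_iff:
  assumes "packed n f"
  shows "strict_T_partition n (topo_of_word n f) g \<longleftrightarrow>
     packed n g \<and>
     (\<forall>i\<in>{1..n}. \<forall>j\<in>{1..n}.
        (f i \<le> f j \<longrightarrow> g i \<le> g j) \<and> (f i < f j \<and> i > j \<longrightarrow> g i < g j)) \<and>
     (\<forall>i\<in>{1..n}. \<forall>j\<in>{1..n}. \<forall>k\<in>{1..n}.
        i < j \<and> j < k \<and> f i = f k \<and> g i = g j \<and> g j = g k \<longrightarrow> f i = f j \<and> f j = f k)"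
proof -
  have le: "\<And>i j. 1 \<le> i \<Longrightarrow> i \<le> n \<Longrightarrow> 1 \<le> j \<Longrightarrow> j \<le> n \<Longrightarrow>
      leT (topo_of_word n f) i j \<longleftrightarrow> f i \<le> f j"
    and lt: "\<And>i j. 1 \<le> i \<Longrightarrow> i \<le> n \<Longrightarrow> 1 \<le> j \<Longrightarrow> j \<le> n \<Longrightarrow>
      ltT (topo_of_word n f) i j \<longleftrightarrow> f i < f j"
    and sim: "\<And>i j. 1 \<le> i \<Longrightarrow> i \<le> n \<Longrightarrow> 1 \<le> j \<Longrightarrow> j \<le> n \<Longrightarrow>
      simT (topo_of_word n f) i j \<longleftrightarrow> f i = f j"
    using leT_topo_of_word_iff[OF assms] ltT_topo_of_word_iff[OF assms]
      simT_topo_of_word_iff[OF assms] by simp_all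
  show ?thesis
    unfolding strict_T_partition_def Ball_def atLeastAtMost_iff
    by (simp add: le lt sim cong: conj_cong imp_cong)
qed

lemma word_le_iff_monotone:
  "word_le n g f \<longleftrightarrow>
     (\<forall>i\<in>{1..n}. \<forall>j\<in>{1..n}.
        (f i \<le> f j \<longrightarrow> g i \<le> g j) \<and> (f i < f j \<and> i > j \<longrightarrow> g i < g j))"
  unfolding word_le_def by (auto intro: order.antisym)

lemma word_le_flat_between:
  assumes "word_le n g f" "i \<in> {1..n}" "j \<in> {1..n}" "k \<in> {1..n}"
    and "i < j" "j < k" "f i = f k" "g i = g j" "g j = g k"
  shows "f i = f j \<and> f j = f k"
proof (rule ccontr)
  assume "\<not> (f i = f j \<and> f j = f k)"
  then consider "f i > f j" | "f j > f k" using \<open>f i = f k\<close> by linarith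
  then show False
  proof cases
    case 1
    then have "g i > g j" using assms(1-3,5) unfolding word_le_def by blast
    then show False using \<open>g i = g j\<close> by simp
  next
    case 2
    then have "g j > g k" using assms(1,3,4,6) unfolding word_le_def by blast
    then show False using \<open>g j = g k\<close> by simp
  qed
qed

theorem lemma18:
  fixes n :: nat and f g :: "nat \<Rightarrow> nat"
  assumes "packed n f" and "packed n g"
  shows "word_le n g f \<longleftrightarrow> strict_T_partition n (topo_of_word n f) g"
proof -
  have "word_le n g f \<Longrightarrow> \<forall>i\<in>{1..n}. \<forall>j\<in>{1..n}. \<forall>k\<in>{1..n}.
      i < j \<and> j < k \<and> f i = f k \<and> g i = g j \<and> g j = g k \<longrightarrow> f i = f j \<and> f j = f k"
    using word_le_flat_between[of n g f] by blast
  then show ?thesis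
    unfolding strict_T_partition_topo_of_word_iff[OF assms(1)] word_le_iff_monotone
    using assms(2) by blast
qed

end
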